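(* Let $(M,d)$ be a bounded metric space such that the family $\mathcal{A}(M)$ of admissible subsets of $M$ is compact and has normal structure, and let $T: M\to M$ be a mapping which diminishes the radius of invariant admissible subsets of $M$. Then $T$ has a fixed point in $M$.
   Context: For $x\in M$ and $K\subseteq M$: $r_x(K)=\sup\{d(x,y):y\in K\}$, $r(K)=\inf\{r_x(K):x\in K\}$, $\delta(K)=\sup\{d(x,y):x,y\in K\}$. A bounded subset $K\subseteq M$ is admissible if it equals the intersection of all closed balls of $M$ containing it; $\mathcal{A}(M)$ denotes the family of admissible subsets. $\mathcal{A}(M)$ is compact if every descending chain of nonempty elements of $\mathcal{A}(M)$ has nonempty intersection. $\mathcal{A}(M)$ has normal structure if $r(K)<\delta(K)$ for every $K\in\mathcal{A}(M)$ with $\delta(K)>0$. $T$ diminishes the radius of invariant admissible subsets if for every $A\in\mathcal{A}(M)$ with $T(A)\subseteq A$, $r_{Tx}(T(A))\le r_x(A)$ for every $x\in M$. *)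

theory Defs
  imports "HOL-Analysis.Analysis"
begin

definition rad_at :: "('a \<Rightarrow> 'a \<Rightarrow> real) \<Rightarrow> 'a \<Rightarrow> 'a set \<Rightarrow> real" where
  "rad_at d x K = Sup {d x y | y. y \<in> K}"

definition cheb_rad :: "('a \<Rightarrow> 'a \<Rightarrow> real) \<Rightarrow> 'a set \<Rightarrow> real" where
  "cheb_rad d K = Inf {rad_at d x K | x. x \<in> K}"

definition diam :: "('a \<Rightarrow> 'a \<Rightarrow> real) \<Rightarrow> 'a set \<Rightarrow> real" where
  "diam d K = Sup {d x y | x y. x \<in> K \<and> y \<in> K}"

definition admissible :: "'a set \<Rightarrow> ('a \<Rightarrow> 'a \<Rightarrow> real) \<Rightarrow> 'a set \<Rightarrow> bool" where
  "admissible M d K \<longleftrightarrow> Metric_space.mbounded M d K \<and>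
     K = M \<inter> \<Inter> {Metric_space.mcball M d x r | x r. x \<in> M \<and> K \<subseteq> Metric_space.mcball M d x r}"

definition adm_compact :: "'a set \<Rightarrow> ('a \<Rightarrow> 'a \<Rightarrow> real) \<Rightarrow> bool" where
  "adm_compact M d \<longleftrightarrow>
     (\<forall>C. C \<noteq> {} \<and> (\<forall>K\<in>C. admissible M d K \<and> K \<noteq> {}) \<and>
          (\<forall>A\<in>C. \<forall>B\<in>C. A \<subseteq> B \<or> B \<subseteq> A) \<longrightarrow> \<Inter>C \<noteq> {})"

definition adm_normal :: "'a set \<Rightarrow> ('a \<Rightarrow> 'a \<Rightarrow> real) \<Rightarrow> bool" where
  "adm_normal M d \<longleftrightarrow>
     (\<forall>K. admissible M d K \<and> diam d K > 0 \<longrightarrow> cheb_rad d K < diam d K)"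

definition diminishes_radius :: "'a set \<Rightarrow> ('a \<Rightarrow> 'a \<Rightarrow> real) \<Rightarrow> ('a \<Rightarrow> 'a) \<Rightarrow> bool" where
  "diminishes_radius M d T \<longleftrightarrow>
     (\<forall>A. admissible M d A \<and> T ` A \<subseteq> A \<longrightarrow>
        (\<forall>x\<in>M. rad_at d (T x) (T ` A) \<le> rad_at d x A))"

end

theory Submission
  imports Defs
begin

text \<open>Let K be a minimal nonempty T-invariant admissible set; it exists because A(M) is
  compact. Minimality forces K to be the admissible hull of T(K), so every ball around a
  point containing T(K) contains K. Combined with the radius hypothesis this shows that
  each sublevel set of the Chebyshev radius function z \<mapsto> r_z(K) on K is again T-invariant,
  and it is admissible as an intersection of balls with K; hence it is empty or all of K.
  Consequently every point of K is a Chebyshev centre, i.e. r(K) = \<delta>(K), and normal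
  structure leaves only \<delta>(K) = 0: K is a single fixed point.\<close>

lemma subset_Zorn_Inter_nonempty:
  assumes "\<A> \<noteq> {}" and ch: "\<And>\<C>. \<lbrakk>\<C> \<noteq> {}; subset.chain \<A> \<C>\<rbrakk> \<Longrightarrow> \<Inter>\<C> \<in> \<A>"
  shows "\<exists>K\<in>\<A>. \<forall>X\<in>\<A>. X \<subseteq> K \<longrightarrow> X = K"
proof -
  have "\<Union>\<C> \<in> uminus ` \<A>" if "\<C> \<noteq> {}" "subset.chain (uminus ` \<A>) \<C>" for \<C>
  proof -
    have "uminus ` \<C> \<subseteq> \<A>"
      using that(2) unfolding subset_chain_def by (auto simp: image_subset_iff)
    then have "subset.chain \<A> (uminus ` \<C>)"
      using that(2) by (auto simp: subset_chain_def)
    then have "\<Inter>(uminus ` \<C>) \<in> \<A>"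
      by (rule ch[rotated]) (use that(1) in simp)
    then show ?thesis
      by (rule image_eqI[rotated]) auto
  qed
  then obtain N where "N \<in> uminus ` \<A>" and max: "\<forall>X\<in>uminus ` \<A>. N \<subseteq> X \<longrightarrow> X = N"
    using subset_Zorn_nonempty[of "uminus ` \<A>"] \<open>\<A> \<noteq> {}\<close> by blast
  then obtain K where "K \<in> \<A>" and "N = - K"
    by blast
  moreover have "X = K" if "X \<in> \<A>" and "X \<subseteq> K" for X
    using max \<open>N = - K\<close> that by blast
  ultimately show ?thesis
    by blast
qed

context Metric_space
begin

lemma bdd_above_dist:
  assumes "mbounded S" and "x \<in> M"
  shows "bdd_above {d x y | y. y \<in> S}"
proof -
  obtain B where "\<forall>u\<in>insert x S. \<forall>v\<in>insert x S. d u v \<le> B"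
    using assms mbounded_insert mbounded_alt by blast
  then show ?thesis
    by (auto intro!: bdd_aboveI[of _ B])
qed

lemma rad_at_le_iff:
  assumes "mbounded S" and "S \<noteq> {}" and "x \<in> M"
  shows "rad_at d x S \<le> r \<longleftrightarrow> S \<subseteq> mcball x r"
proof -
  have "rad_at d x S \<le> r \<longleftrightarrow> (\<forall>y\<in>S. d x y \<le> r)"
    unfolding rad_at_def using assms bdd_above_dist by (subst cSup_le_iff) auto
  then show ?thesis
    using assms mbounded_subset_mspace[OF assms(1)] by auto
qed

lemma cheb_rad_less_iff:
  assumes "mbounded S" and "S \<noteq> {}"
  shows "cheb_rad d S < r \<longleftrightarrow> (\<exists>x\<in>S. rad_at d x S < r)"
proof -
  have "0 \<le> rad_at d x S" if "x \<in> S" for x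
  proof -
    have "x \<in> M"
      using that assms(1) mbounded_subset_mspace by blast
    then have "d x x \<le> rad_at d x S"
      unfolding rad_at_def using that bdd_above_dist[OF assms(1)] by (intro cSup_upper) blast+
    then show ?thesis
      using nonneg[of x x] by linarith
  qed
  then have "bdd_below {rad_at d x S | x. x \<in> S}"
    by (auto intro!: bdd_belowI[of _ 0])
  then show ?thesis
    unfolding cheb_rad_def using assms(2) by (subst cInf_less_iff) auto
qed

lemma diam_le_iff:
  assumes "mbounded S" and "S \<noteq> {}"
  shows "diam d S \<le> r \<longleftrightarrow> (\<forall>x\<in>S. \<forall>y\<in>S. d x y \<le> r)"
proof -
  obtain B where "\<forall>x\<in>S. \<forall>y\<in>S. d x y \<le> B"
    using assms(1) mbounded_alt by blast
  then have "bdd_above {d x y | x y. x \<in> S \<and> y \<in> S}"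
    by (auto intro!: bdd_aboveI[of _ B])
  then show ?thesis
    unfolding diam_def using assms(2) by (subst cSup_le_iff) blast+
qed

definition adm_hull :: "'a set \<Rightarrow> 'a set" where
  "adm_hull S = M \<inter> \<Inter> {mcball x r | x r. x \<in> M \<and> S \<subseteq> mcball x r}"

lemma admissible_iff: "admissible M d K \<longleftrightarrow> mbounded K \<and> adm_hull K = K"
  unfolding admissible_def adm_hull_def by auto

lemma in_adm_hull:
  "z \<in> adm_hull S \<longleftrightarrow> z \<in> M \<and> (\<forall>x r. x \<in> M \<and> S \<subseteq> mcball x r \<longrightarrow> z \<in> mcball x r)"
  unfolding adm_hull_def by blast

lemma adm_hull_subset_mspace: "adm_hull S \<subseteq> M"
  by (simp add: in_adm_hull subset_iff)

lemma adm_hull_subset_mcball: "x \<in> M \<Longrightarrow> S \<subseteq> mcball x r \<Longrightarrow> adm_hull S \<subseteq> mcball x r"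
  by (simp add: in_adm_hull subset_iff)

lemma subset_adm_hull: "S \<subseteq> M \<Longrightarrow> S \<subseteq> adm_hull S"
  unfolding adm_hull_def by blast

lemma adm_hull_mono: "S \<subseteq> S' \<Longrightarrow> adm_hull S \<subseteq> adm_hull S'"
  by (auto simp: in_adm_hull)

lemma admissible_adm_hull:
  assumes "mbounded M"
  shows "admissible M d (adm_hull S)"
proof -
  have "adm_hull (adm_hull S) \<subseteq> adm_hull S"
    by (meson adm_hull_subset_mcball in_adm_hull subsetI)
  moreover have "mbounded (adm_hull S)"
    using assms adm_hull_subset_mspace by (rule mbounded_subset)
  ultimately show ?thesis
    by (simp add: admissible_iff adm_hull_subset_mspace subset_adm_hull subset_antisym)
qed

lemma admissible_mspace: "mbounded M \<Longrightarrow> admissible M d M"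
  by (simp add: admissible_iff adm_hull_subset_mspace subset_adm_hull subset_antisym)

lemma admissible_mcball: "x \<in> M \<Longrightarrow> admissible M d (mcball x r)"
  by (simp add: admissible_iff mbounded_mcball adm_hull_subset_mcball subset_adm_hull
      mcball_subset_mspace subset_antisym)

lemma admissible_Inter:
  assumes "\<C> \<noteq> {}" and "\<And>K. K \<in> \<C> \<Longrightarrow> admissible M d K"
  shows "admissible M d (\<Inter>\<C>)"
proof -
  obtain K where K: "K \<in> \<C>"
    using assms(1) by blast
  have "adm_hull (\<Inter>\<C>) \<subseteq> \<Inter>\<C>"
    using assms(2) adm_hull_mono[of "\<Inter>\<C>"] by (fastforce simp: admissible_iff)
  moreover have "mbounded (\<Inter>\<C>)"
    using assms(2)[OF K] K by (meson Inter_lower admissible_iff mbounded_subset)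
  ultimately show ?thesis
    by (simp add: admissible_iff mbounded_subset_mspace subset_adm_hull subset_antisym)
qed

lemma admissible_rad_at_sublevel:
  assumes "admissible M d K" and "K \<noteq> {}"
  shows "admissible M d {z \<in> K. rad_at d z K \<le> r}"
proof -
  have "mbounded K"
    using assms(1) by (simp add: admissible_iff)
  then have KM: "K \<subseteq> M"
    by (rule mbounded_subset_mspace)
  have "rad_at d z K \<le> r \<longleftrightarrow> (\<forall>y\<in>K. z \<in> mcball y r)" if "z \<in> K" for z
    using rad_at_le_iff[OF \<open>mbounded K\<close> assms(2), of z r] that KM
    by (auto simp: commute subset_iff)
  then have "{z \<in> K. rad_at d z K \<le> r} = \<Inter> (insert K ((\<lambda>y. mcball y r) ` K))"
    by auto
  also have "admissible M d \<dots>"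
    using assms(1) KM by (intro admissible_Inter) (auto intro: admissible_mcball)
  finally show ?thesis .
qed

definition minimal_invariant_adm :: "('a \<Rightarrow> 'a) \<Rightarrow> 'a set \<Rightarrow> bool" where
  "minimal_invariant_adm T K \<longleftrightarrow> admissible M d K \<and> K \<noteq> {} \<and> T ` K \<subseteq> K \<and>
     (\<forall>L. admissible M d L \<and> L \<noteq> {} \<and> T ` L \<subseteq> L \<and> L \<subseteq> K \<longrightarrow> L = K)"

lemma minimal_invariant_adm_exists:
  assumes "adm_compact M d" and "mbounded M" and "M \<noteq> {}" and "T ` M \<subseteq> M"
  shows "\<exists>K. minimal_invariant_adm T K"
proof -
  define \<A> where "\<A> = {K. admissible M d K \<and> K \<noteq> {} \<and> T ` K \<subseteq> K}"
  have "\<Inter>\<C> \<in> \<A>" if "\<C> \<noteq> {}" and "subset.chain \<A> \<C>" for \<C>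
  proof -
    have adm: "\<forall>K\<in>\<C>. admissible M d K \<and> K \<noteq> {}" and inv: "\<forall>K\<in>\<C>. T ` K \<subseteq> K"
      and chain: "\<forall>A\<in>\<C>. \<forall>B\<in>\<C>. A \<subseteq> B \<or> B \<subseteq> A"
      using that(2) unfolding subset_chain_def \<A>_def by auto
    have "\<Inter>\<C> \<noteq> {}"
      using assms(1) that(1) adm chain unfolding adm_compact_def by simp
    moreover have "admissible M d (\<Inter>\<C>)"
      using that(1) adm by (intro admissible_Inter) simp_all
    moreover have "T ` \<Inter>\<C> \<subseteq> \<Inter>\<C>"
      using inv by blast
    ultimately show ?thesis
      by (simp add: \<A>_def)
  qed
  moreover have "M \<in> \<A>"
    using assms by (simp add: \<A>_def admissible_mspace)
  ultimately obtain K where "K \<in> \<A>" and "\<forall>L\<in>\<A>. L \<subseteq> K \<longrightarrow> L = K"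
    using subset_Zorn_Inter_nonempty[of \<A>] by blast
  then show ?thesis
    unfolding minimal_invariant_adm_def \<A>_def by blast
qed

lemma minimal_invariant_adm_hull_image:
  assumes "mbounded M" and K: "minimal_invariant_adm T K"
  shows "adm_hull (T ` K) = K"
proof -
  have KM: "K \<subseteq> M" and TK: "T ` K \<subseteq> K"
    using K by (auto simp: minimal_invariant_adm_def admissible_iff mbounded_subset_mspace)
  have hull_sub: "adm_hull (T ` K) \<subseteq> K"
    using adm_hull_mono[OF TK] K by (simp add: minimal_invariant_adm_def admissible_iff)
  moreover have "T ` K \<subseteq> adm_hull (T ` K)"
    using KM TK by (intro subset_adm_hull) blast
  ultimately have "T ` adm_hull (T ` K) \<subseteq> adm_hull (T ` K)"
    by blast
  moreover have "adm_hull (T ` K) \<noteq> {}"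
    using \<open>T ` K \<subseteq> adm_hull (T ` K)\<close> K by (auto simp: minimal_invariant_adm_def)
  ultimately show ?thesis
    using K hull_sub admissible_adm_hull[OF assms(1)]
    unfolding minimal_invariant_adm_def by blast
qed

lemma minimal_invariant_rad_at_image_le:
  assumes "mbounded M" and "diminishes_radius M d T"
    and K: "minimal_invariant_adm T K" and "z \<in> K" and "rad_at d z K \<le> r"
  shows "rad_at d (T z) K \<le> r"
proof -
  have K_adm: "admissible M d K" and "K \<noteq> {}" and TK: "T ` K \<subseteq> K"
    using K unfolding minimal_invariant_adm_def by blast+
  then have "mbounded K"
    by (simp add: admissible_iff)
  then have "mbounded (T ` K)" and KM: "K \<subseteq> M"
    using TK by (simp_all add: mbounded_subset mbounded_subset_mspace)
  then have "z \<in> M" and "T z \<in> M"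
    using TK \<open>z \<in> K\<close> by blast+
  have "rad_at d (T z) (T ` K) \<le> rad_at d z K"
    using assms(2) K_adm TK \<open>z \<in> M\<close> unfolding diminishes_radius_def by blast
  then have "rad_at d (T z) (T ` K) \<le> r"
    using assms(5) by linarith
  then have "T ` K \<subseteq> mcball (T z) r"
    using rad_at_le_iff[OF \<open>mbounded (T ` K)\<close> _ \<open>T z \<in> M\<close>] \<open>K \<noteq> {}\<close> by blast
  then have "adm_hull (T ` K) \<subseteq> mcball (T z) r"
    by (rule adm_hull_subset_mcball[OF \<open>T z \<in> M\<close>])
  then have "K \<subseteq> mcball (T z) r"
    by (simp add: minimal_invariant_adm_hull_image[OF assms(1) K])
  then show ?thesis
    using rad_at_le_iff[OF \<open>mbounded K\<close> \<open>K \<noteq> {}\<close> \<open>T z \<in> M\<close>] by blast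
qed

lemma minimal_invariant_diam_le_cheb_rad:
  assumes "mbounded M" and "diminishes_radius M d T" and K: "minimal_invariant_adm T K"
  shows "diam d K \<le> cheb_rad d K"
proof (rule dense_ge)
  fix r assume "cheb_rad d K < r"
  have K_adm: "admissible M d K" and "K \<noteq> {}" and TK: "T ` K \<subseteq> K"
    and min: "\<And>L. \<lbrakk>admissible M d L; L \<noteq> {}; T ` L \<subseteq> L; L \<subseteq> K\<rbrakk> \<Longrightarrow> L = K"
    using K unfolding minimal_invariant_adm_def by blast+
  then have "mbounded K"
    by (simp add: admissible_iff)
  then have KM: "K \<subseteq> M"
    by (rule mbounded_subset_mspace)
  define L where "L = {z \<in> K. rad_at d z K \<le> r}"
  obtain c where "c \<in> K" and "rad_at d c K < r"
    using cheb_rad_less_iff[OF \<open>mbounded K\<close> \<open>K \<noteq> {}\<close>] \<open>cheb_rad d K < r\<close> by blast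
  then have "L \<noteq> {}"
    unfolding L_def by force
  moreover have "T ` L \<subseteq> L"
    using minimal_invariant_rad_at_image_le[OF assms] TK unfolding L_def by blast
  moreover have "L \<subseteq> K"
    unfolding L_def by blast
  ultimately have "L = K"
    using min admissible_rad_at_sublevel[OF K_adm \<open>K \<noteq> {}\<close>] unfolding L_def by blast
  have "d x y \<le> r" if "x \<in> K" and "y \<in> K" for x y
  proof -
    have "rad_at d x K \<le> r"
      using \<open>L = K\<close> \<open>x \<in> K\<close> unfolding L_def by blast
    then have "K \<subseteq> mcball x r"
      using rad_at_le_iff[OF \<open>mbounded K\<close> \<open>K \<noteq> {}\<close>] KM \<open>x \<in> K\<close> by blast
    then show ?thesis
      using \<open>y \<in> K\<close> by auto
  qed
  then show "diam d K \<le> r"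
    using diam_le_iff[OF \<open>mbounded K\<close> \<open>K \<noteq> {}\<close>] by blast
qed

end

theorem theorem2p2:
  fixes M :: "'a set" and d :: "'a \<Rightarrow> 'a \<Rightarrow> real" and T :: "'a \<Rightarrow> 'a"
  assumes "Metric_space M d"
    and "M \<noteq> {}"
    and "Metric_space.mbounded M d M"
    and "adm_compact M d"
    and "adm_normal M d"
    and "T ` M \<subseteq> M"
    and "diminishes_radius M d T"
  shows "\<exists>x\<in>M. T x = x"
proof -
  interpret Metric_space M d by fact
  obtain K where K: "minimal_invariant_adm T K"
    using minimal_invariant_adm_exists assms(2-4,6) by blast
  then have "admissible M d K" and "K \<noteq> {}" and "T ` K \<subseteq> K"
    by (auto simp: minimal_invariant_adm_def)
  then have "mbounded K" and KM: "K \<subseteq> M"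
    by (auto simp: admissible_iff mbounded_subset_mspace)
  have "diam d K \<le> cheb_rad d K"
    using minimal_invariant_diam_le_cheb_rad assms(3,7) K by blast
  with assms(5) \<open>admissible M d K\<close> have "diam d K \<le> 0"
    unfolding adm_normal_def by force
  then have "\<forall>x\<in>K. \<forall>y\<in>K. d x y \<le> 0"
    using diam_le_iff \<open>mbounded K\<close> \<open>K \<noteq> {}\<close> by blast
  then have "T x = x" if "x \<in> K" for x
    using that \<open>T ` K \<subseteq> K\<close> KM by (metis image_subset_iff nonneg order_antisym subsetD zero)
  then show ?thesis
    using \<open>K \<noteq> {}\<close> KM by blast
qed

end
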